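(* Let $G$ be a graph with vertex set $[n]$. Then the set $\mathrm{FPF}(G)$ of $G$-friendship parking functions is non-empty if and only if $G$ contains a Hamiltonian path.
   Context: $[n]=\{1,\dots,n\}$. A parking preference is a vector $p=(p_1,\dots,p_n)\in[n]^n$; $p_i$ is the preferred spot of car $i$ in a one-way street with spots $1,\dots,n$. Friendship parking process for a graph $G$ on vertex set $[n]$: cars $1,\dots,n$ enter in this order, all spots initially unoccupied. A spot $k$ is available for car $i$ if it is unoccupied when car $i$ enters, and each of the neighbouring spots $k-1$ and $k+1$ is either unoccupied or occupied by a car $j$ that is adjacent to $i$ in $G$ (spots $0$ and $n+1$ are considered unoccupied). Car $i$ parks in the first spot $k\ge p_i$ that is available for it; if none exists, car $i$ fails to park. $p$ is a $G$-friendship parking function if all $n$ cars park; $\mathrm{FPF}(G)$ denotes the set of these. A Hamiltonian path of $G$ is a sequence of all $n$ distinct vertices $(v_1,\dots,v_n)$ with $\{v_k,v_{k+1}\}$ an edge of $G$ for all $k\in[n-1]$. *)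

theory Defs
  imports Main
begin

text \<open>A parking state is a map from spots to the car occupying it (None = unoccupied).\<close>

definition simple_graph_on :: "nat \<Rightarrow> (nat \<Rightarrow> nat \<Rightarrow> bool) \<Rightarrow> bool" where
  "simple_graph_on n E \<longleftrightarrow>
     (\<forall>u v. E u v \<longrightarrow> u \<in> {1..n} \<and> v \<in> {1..n}) \<and>
     (\<forall>u v. E u v \<longrightarrow> E v u) \<and> (\<forall>u. \<not> E u u)"

text \<open>Neighbouring spot s is unoccupied or occupied by a car adjacent to i.
  Spots 0 and n+1 are never occupied in the process (only spots in [n] get filled).\<close>
definition ok_neighbour :: "(nat \<Rightarrow> nat \<Rightarrow> bool) \<Rightarrow> (nat \<Rightarrow> nat option) \<Rightarrow> nat \<Rightarrow> nat \<Rightarrow> bool" where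
  "ok_neighbour E occ i s \<longleftrightarrow> (case occ s of None \<Rightarrow> True | Some j \<Rightarrow> E i j)"

definition available :: "nat \<Rightarrow> (nat \<Rightarrow> nat \<Rightarrow> bool) \<Rightarrow> (nat \<Rightarrow> nat option) \<Rightarrow> nat \<Rightarrow> nat \<Rightarrow> bool" where
  "available n E occ i k \<longleftrightarrow>
     k \<in> {1..n} \<and> occ k = None \<and> ok_neighbour E occ i (k - 1) \<and> ok_neighbour E occ i (k + 1)"

definition park_car :: "nat \<Rightarrow> (nat \<Rightarrow> nat \<Rightarrow> bool) \<Rightarrow> nat \<Rightarrow> nat \<Rightarrow> (nat \<Rightarrow> nat option) \<Rightarrow> (nat \<Rightarrow> nat option) option" where
  "park_car n E i q occ =
     (if \<exists>k. q \<le> k \<and> available n E occ i k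
      then Some (occ((LEAST k. q \<le> k \<and> available n E occ i k) := Some i))
      else None)"

text \<open>Run cars 1..m in order; preference of car i is p ! (i-1).\<close>
fun run_cars :: "nat \<Rightarrow> (nat \<Rightarrow> nat \<Rightarrow> bool) \<Rightarrow> nat list \<Rightarrow> nat \<Rightarrow> (nat \<Rightarrow> nat option) option" where
  "run_cars n E p 0 = Some (\<lambda>_. None)"
| "run_cars n E p (Suc m) =
     (case run_cars n E p m of None \<Rightarrow> None
      | Some occ \<Rightarrow> park_car n E (Suc m) (p ! m) occ)"

definition FPF :: "nat \<Rightarrow> (nat \<Rightarrow> nat \<Rightarrow> bool) \<Rightarrow> nat list set" where
  "FPF n E = {p. length p = n \<and> set p \<subseteq> {1..n} \<and> run_cars n E p n \<noteq> None}"

definition hamiltonian_path :: "nat \<Rightarrow> (nat \<Rightarrow> nat \<Rightarrow> bool) \<Rightarrow> nat list \<Rightarrow> bool" where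
  "hamiltonian_path n E vs \<longleftrightarrow>
     length vs = n \<and> distinct vs \<and> set vs = {1..n} \<and>
     (\<forall>k. Suc k < n \<longrightarrow> E (vs ! k) (vs ! Suc k))"

end

theory Submission
  imports Defs
begin

text \<open>A run that parks all cars leaves every spot filled, and each car can only park next to
  cars it is adjacent to; so reading the cars off the street from left to right gives a
  Hamiltonian path. Conversely, along a Hamiltonian path let every car prefer the spot equal
  to its position on the path: whenever a car arrives, the cars already parked beside its
  spot are its path neighbours, so it parks exactly there.\<close>

definition neighbours_adjacent :: "(nat \<Rightarrow> nat \<Rightarrow> bool) \<Rightarrow> (nat \<Rightarrow> nat option) \<Rightarrow> bool" where
  "neighbours_adjacent E occ \<longleftrightarrow>
     (\<forall>k i j. occ k = Some i \<longrightarrow> occ (Suc k) = Some j \<longrightarrow> E i j)"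

lemma symp_if_simple_graph_on: "simple_graph_on n E \<Longrightarrow> symp E"
  by (auto simp: simple_graph_on_def intro: sympI)

lemma park_car_SomeE:
  assumes "park_car n E i q occ = Some occ'"
  obtains k where "available n E occ i k" "occ' = occ(k \<mapsto> i)"
proof -
  have ex: "\<exists>k. q \<le> k \<and> available n E occ i k"
    using assms by (auto simp: park_car_def split: if_splits)
  show thesis
  proof
    show "available n E occ i (LEAST k. q \<le> k \<and> available n E occ i k)"
      using LeastI_ex[OF ex] by blast
    show "occ' = occ((LEAST k. q \<le> k \<and> available n E occ i k) \<mapsto> i)"
      using assms ex by (simp add: park_car_def)
  qed
qed

lemma park_car_at_preference:
  assumes "available n E occ i q"
  shows "park_car n E i q occ = Some (occ(q \<mapsto> i))"
proof -
  have "(LEAST k. q \<le> k \<and> available n E occ i k) = q"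
    by (rule Least_equality) (use assms in auto)
  then show ?thesis
    using assms by (auto simp: park_car_def)
qed

lemma run_cars_SucE:
  assumes "run_cars n E p (Suc m) = Some occ'"
  obtains occ k where "run_cars n E p m = Some occ"
    "available n E occ (Suc m) k" "occ' = occ(k \<mapsto> Suc m)"
proof -
  obtain occ where run: "run_cars n E p m = Some occ"
    and park: "park_car n E (Suc m) (p ! m) occ = Some occ'"
    using assms by (auto split: option.splits)
  show thesis
    using park_car_SomeE[OF park] that[OF run] by blast
qed

lemma neighbours_adjacent_park:
  assumes "symp E" "neighbours_adjacent E occ" "available n E occ i k"
  shows "neighbours_adjacent E (occ(k \<mapsto> i))"
  unfolding neighbours_adjacent_def
proof (intro allI impI)
  fix l a b
  assume a: "(occ(k \<mapsto> i)) l = Some a" and b: "(occ(k \<mapsto> i)) (Suc l) = Some b"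
  have left: "ok_neighbour E occ i (k - 1)" and right: "ok_neighbour E occ i (k + 1)"
    using assms(3) by (auto simp: available_def)
  consider "l = k" | "Suc l = k" | "l \<noteq> k" "Suc l \<noteq> k" by blast
  then show "E a b"
  proof cases
    case 1
    then show ?thesis using a b right by (simp add: ok_neighbour_def)
  next
    case 2
    then have "E b a" using a b left by (auto simp: ok_neighbour_def)
    then show ?thesis using assms(1) by (blast dest: sympD)
  next
    case 3
    then show ?thesis using a b assms(2) by (simp add: neighbours_adjacent_def)
  qed
qed

lemma run_cars_dom_ran:
  assumes "run_cars n E p m = Some occ"
  shows "dom occ \<subseteq> {1..n} \<and> card (dom occ) = m \<and> ran occ = {1..m}"
  using assms
proof (induction m arbitrary: occ)
  case 0
  then show ?case by auto
next
  case (Suc m)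
  obtain occ0 k where run: "run_cars n E p m = Some occ0"
    and k: "available n E occ0 (Suc m) k" and occ: "occ = occ0(k \<mapsto> Suc m)"
    using Suc.prems by (rule run_cars_SucE)
  have IH: "dom occ0 \<subseteq> {1..n}" "card (dom occ0) = m" "ran occ0 = {1..m}"
    using Suc.IH[OF run] by auto
  have k: "k \<in> {1..n}" "occ0 k = None"
    using k by (auto simp: available_def)
  then have "dom occ = insert k (dom occ0)" "ran occ = insert (Suc m) (ran occ0)"
    using occ by auto
  moreover have "finite (dom occ0)"
    using IH(1) finite_subset by blast
  ultimately show ?case
    using IH k by (auto simp: domIff)
qed

lemma run_cars_neighbours_adjacent:
  assumes "symp E" "run_cars n E p m = Some occ"
  shows "neighbours_adjacent E occ"
  using assms(2)
proof (induction m arbitrary: occ)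
  case 0
  then show ?case by (auto simp: neighbours_adjacent_def)
next
  case (Suc m)
  obtain occ0 k where "run_cars n E p m = Some occ0"
    and "available n E occ0 (Suc m) k" and "occ = occ0(k \<mapsto> Suc m)"
    using Suc.prems by (rule run_cars_SucE)
  then show ?case
    using Suc.IH neighbours_adjacent_park[OF assms(1)] by blast
qed

lemma hamiltonian_path_of_full_street:
  assumes "dom occ = {1..n}" "ran occ = {1..n}" "neighbours_adjacent E occ"
  shows "hamiltonian_path n E (map (\<lambda>k. the (occ (Suc k))) [0..<n])"
proof -
  define vs where "vs = map (\<lambda>k. the (occ (Suc k))) [0..<n]"
  have len: "length vs = n"
    by (simp add: vs_def)
  have spot: "occ (Suc k) = Some (vs ! k)" if "k < n" for k
  proof -
    have "Suc k \<in> dom occ"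
      using that assms(1) by simp
    then show ?thesis
      using that by (auto simp: vs_def)
  qed
  have "set vs = ran occ"
  proof
    show "set vs \<subseteq> ran occ"
      using spot len by (auto simp: in_set_conv_nth) (metis ranI)
    show "ran occ \<subseteq> set vs"
    proof
      fix i
      assume "i \<in> ran occ"
      then obtain k where k: "occ k = Some i"
        by (auto simp: ran_def)
      then have "k \<in> {1..n}"
        using assms(1) by (blast intro: domI)
      then obtain j where j: "k = Suc j" "j < n"
        by (cases k) auto
      then have "vs ! j = i"
        using spot[of j] k by simp
      then show "i \<in> set vs"
        using nth_mem[of j vs] j(2) len by simp
    qed
  qed
  then have set: "set vs = {1..n}"
    using assms(2) by simp
  then have "distinct vs"
    using len by (intro card_distinct) simp
  moreover have "E (vs ! k) (vs ! Suc k)" if "Suc k < n" for k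
    using that spot[of k] spot[of "Suc k"] assms(3) by (simp add: neighbours_adjacent_def)
  ultimately show ?thesis
    using set len by (simp add: hamiltonian_path_def vs_def)
qed

theorem hamiltonian_path_if_FPF:
  assumes "symp E" "p \<in> FPF n E"
  shows "\<exists>vs. hamiltonian_path n E vs"
proof -
  obtain occ where run: "run_cars n E p n = Some occ"
    using assms(2) by (auto simp: FPF_def)
  have "dom occ = {1..n}"
    using run_cars_dom_ran[OF run]
    by (metis card_atLeastAtMost card_subset_eq diff_Suc_1 finite_atLeastAtMost)
  then show ?thesis
    using hamiltonian_path_of_full_street run_cars_dom_ran[OF run]
      run_cars_neighbours_adjacent[OF assms(1) run] by blast
qed

text \<open>The street after the first \<open>m\<close> cars have parked at their positions along the path \<open>vs\<close>.\<close>
definition path_occupancy :: "nat list \<Rightarrow> nat \<Rightarrow> nat \<Rightarrow> nat option" where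
  "path_occupancy vs m k =
     (if k \<in> {1..length vs} \<and> vs ! (k - 1) \<le> m then Some (vs ! (k - 1)) else None)"

lemma path_occupancy_0:
  assumes "0 \<notin> set vs"
  shows "path_occupancy vs 0 = Map.empty"
proof
  fix k
  show "path_occupancy vs 0 k = None"
    using assms by (auto simp: path_occupancy_def in_set_conv_nth)
qed

lemma path_occupancy_Suc:
  assumes "distinct vs" "j < length vs" "vs ! j = Suc m"
  shows "(path_occupancy vs m)(Suc j \<mapsto> Suc m) = path_occupancy vs (Suc m)"
proof
  fix k
  have "vs ! (k - 1) \<noteq> Suc m" if "k \<in> {1..length vs}" "k \<noteq> Suc j"
    using that assms nth_eq_iff_index_eq[OF assms(1), of "k - 1" j] by auto
  then show "((path_occupancy vs m)(Suc j \<mapsto> Suc m)) k = path_occupancy vs (Suc m) k"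
    using assms by (auto simp: path_occupancy_def le_Suc_eq)
qed

lemma available_path_occupancy:
  assumes "symp E" "hamiltonian_path n E vs" "j < n" "vs ! j = Suc m"
  shows "available n E (path_occupancy vs m) (Suc m) (Suc j)"
proof -
  have len: "length vs = n" and edge: "\<And>k. Suc k < n \<Longrightarrow> E (vs ! k) (vs ! Suc k)"
    using assms(2) by (auto simp: hamiltonian_path_def)
  have "ok_neighbour E (path_occupancy vs m) (Suc m) j"
  proof (cases j)
    case (Suc i)
    then have "E (Suc m) (vs ! i)"
      using edge[of i] assms(1,3,4) by (auto dest: sympD)
    then show ?thesis
      using Suc by (simp add: ok_neighbour_def path_occupancy_def)
  qed (simp add: ok_neighbour_def path_occupancy_def)
  moreover have "ok_neighbour E (path_occupancy vs m) (Suc m) (Suc (Suc j))"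
    using edge[of j] assms(4) len by (simp add: ok_neighbour_def path_occupancy_def)
  ultimately show ?thesis
    using assms(3,4) len by (simp add: available_def path_occupancy_def)
qed

text \<open>Car \<open>Suc m\<close>, whose preference is \<open>p ! m\<close>, prefers its (1-based) position on the path.\<close>
lemma run_cars_along_path:
  assumes "symp E" "hamiltonian_path n E vs"
    and pref: "\<And>m. m < n \<Longrightarrow> p ! m \<in> {1..n} \<and> vs ! (p ! m - 1) = Suc m"
  shows "m \<le> n \<Longrightarrow> run_cars n E p m = Some (path_occupancy vs m)"
proof (induction m)
  case 0
  have "0 \<notin> set vs"
    using assms(2) by (auto simp: hamiltonian_path_def)
  then show ?case by (simp add: path_occupancy_0)
next
  case (Suc m)
  define j where "j = p ! m - 1"
  have j: "j < n" "vs ! j = Suc m" "p ! m = Suc j"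
    using pref[of m] Suc.prems by (auto simp: j_def)
  have "park_car n E (Suc m) (p ! m) (path_occupancy vs m) = Some (path_occupancy vs (Suc m))"
    using park_car_at_preference[OF available_path_occupancy[OF assms(1,2) j(1,2)]]
      path_occupancy_Suc[of vs j m] assms(2) j by (simp add: hamiltonian_path_def)
  then show ?case
    using Suc by simp
qed

lemma path_positions_exist:
  assumes "hamiltonian_path n E vs"
  obtains p where "length p = n"
    "\<And>m. m < n \<Longrightarrow> p ! m \<in> {1..n} \<and> vs ! (p ! m - 1) = Suc m"
proof
  let ?pos = "inv_into {..<n} ((!) vs)"
  have len: "length vs = n" and set: "set vs = {1..n}"
    using assms by (auto simp: hamiltonian_path_def)
  have img: "(!) vs ` {..<n} = {1..n}"
    using len set by (auto simp: set_conv_nth)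
  have pos: "?pos i < n" "vs ! ?pos i = i" if "i \<in> {1..n}" for i
    using that img inv_into_into[of i "(!) vs" "{..<n}"] f_inv_into_f[of i "(!) vs" "{..<n}"]
    by auto
  let ?p = "map (\<lambda>i. Suc (?pos i)) [1..<Suc n]"
  show "length ?p = n" by simp
  show "?p ! m \<in> {1..n} \<and> vs ! (?p ! m - 1) = Suc m" if "m < n" for m
    using that pos[of "Suc m"] by (simp add: Suc_le_eq del: upt_Suc)
qed

theorem FPF_nonempty_if_hamiltonian_path:
  assumes "symp E" "hamiltonian_path n E vs"
  shows "FPF n E \<noteq> {}"
proof -
  obtain p where p: "length p = n"
    "\<And>m. m < n \<Longrightarrow> p ! m \<in> {1..n} \<and> vs ! (p ! m - 1) = Suc m"
    using path_positions_exist[OF assms(2)] by blast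
  then have "set p \<subseteq> {1..n}"
    by (auto simp: in_set_conv_nth)
  then have "p \<in> FPF n E"
    using run_cars_along_path[OF assms p(2)] p(1) by (simp add: FPF_def)
  then show ?thesis by blast
qed

theorem proposition2p1:
  fixes n :: nat and E :: "nat \<Rightarrow> nat \<Rightarrow> bool"
  assumes "simple_graph_on n E"
  shows "FPF n E \<noteq> {} \<longleftrightarrow> (\<exists>vs. hamiltonian_path n E vs)"
  using symp_if_simple_graph_on[OF assms] hamiltonian_path_if_FPF FPF_nonempty_if_hamiltonian_path
  by blast

end
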